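(* Let $G$ be a group with a conjugation-closed generating set $X$ and let $g\in\mathrm{Mon}(X)$. If $x_1,\dots,x_n\in\mathrm{Mon}(X)$ satisfy $x_1\cdots x_n=g$ and $\ell(x_1)+\cdots+\ell(x_n)=\ell(g)$, then for any integers $1\le i_1<\cdots<i_k\le n$ we have $x_{i_1}\cdots x_{i_k}\in[1,g]$.
   Context: $\mathrm{Mon}(X)$ is the submonoid of $G$ generated by $X$; for $h\in\mathrm{Mon}(X)$, $\ell(h)$ is the minimal length of a product of elements of $X$ equal to $h$. For $h,g\in\mathrm{Mon}(X)$, $h\le g$ means there is $h'\in\mathrm{Mon}(X)$ with $hh'=g$ and $\ell(h)+\ell(h')=\ell(g)$; $[1,g]=\{h\in\mathrm{Mon}(X):h\le g\}$. *)

theory Defs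
  imports "HOL-Algebra.Algebra"
begin

definition mprod :: "('a, 'b) monoid_scheme \<Rightarrow> 'a list \<Rightarrow> 'a" where
  "mprod M xs = foldr (\<lambda>x y. x \<otimes>\<^bsub>M\<^esub> y) xs \<one>\<^bsub>M\<^esub>"

definition MonX :: "('a, 'b) monoid_scheme \<Rightarrow> 'a set \<Rightarrow> 'a set" where
  "MonX M S = {h. \<exists>xs. set xs \<subseteq> S \<and> mprod M xs = h}"

definition wlen :: "('a, 'b) monoid_scheme \<Rightarrow> 'a set \<Rightarrow> 'a \<Rightarrow> nat" where
  "wlen M S h = (LEAST n. \<exists>xs. set xs \<subseteq> S \<and> mprod M xs = h \<and> length xs = n)"

definition mle :: "('a, 'b) monoid_scheme \<Rightarrow> 'a set \<Rightarrow> 'a \<Rightarrow> 'a \<Rightarrow> bool" where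
  "mle M S h g \<longleftrightarrow> h \<in> MonX M S \<and> g \<in> MonX M S \<and>
     (\<exists>h' \<in> MonX M S. h \<otimes>\<^bsub>M\<^esub> h' = g \<and> wlen M S h + wlen M S h' = wlen M S g)"

definition interval1 :: "('a, 'b) monoid_scheme \<Rightarrow> 'a set \<Rightarrow> 'a \<Rightarrow> 'a set" where
  "interval1 M S g = {h \<in> MonX M S. mle M S h g}"

end

theory Submission
  imports Defs
begin

text \<open>Move every unselected factor to the right past the selected ones that follow it:
  \<open>a \<otimes> Y = Y \<otimes> (inv Y \<otimes> a \<otimes> Y)\<close>. Since the alphabet is closed under conjugation, conjugating
  does not increase word length, so \<open>g = mprod (nths xs I) \<otimes> h\<close> where \<open>\<ell>(h)\<close> is at most the
  sum of the lengths of the unselected factors. Subadditivity of \<open>\<ell>\<close> together with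
  \<open>\<Sum> \<ell>(x\<^sub>i) = \<ell>(g)\<close> then squeezes \<open>\<ell>(mprod (nths xs I)) + \<ell>(h)\<close> to exactly \<open>\<ell>(g)\<close>.\<close>

lemma sum_list_nths_Compl:
  fixes f :: "'a \<Rightarrow> 'b::comm_monoid_add"
  shows "(\<Sum>x\<leftarrow>nths xs I. f x) + (\<Sum>x\<leftarrow>nths xs (- I). f x) = (\<Sum>x\<leftarrow>xs. f x)"
proof (induction xs arbitrary: I)
  case Nil
  then show ?case by simp
next
  case (Cons a xs)
  have "{j. Suc j \<in> - I} = - {j. Suc j \<in> I}" by auto
  then show ?case
    using Cons[of "{j. Suc j \<in> I}"] by (auto simp: nths_Cons ac_simps)
qed

context monoid
begin

lemma mprod_Nil [simp]: "mprod G [] = \<one>"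
  by (simp add: mprod_def)

lemma mprod_Cons [simp]: "mprod G (x # xs) = x \<otimes> mprod G xs"
  by (simp add: mprod_def)

lemma mprod_closed: "set xs \<subseteq> carrier G \<Longrightarrow> mprod G xs \<in> carrier G"
  by (induction xs) auto

lemma mprod_append:
  "set xs \<subseteq> carrier G \<Longrightarrow> set ys \<subseteq> carrier G \<Longrightarrow>
   mprod G (xs @ ys) = mprod G xs \<otimes> mprod G ys"
  by (induction xs) (auto simp: m_assoc mprod_closed)

lemma MonX_subset_carrier: "S \<subseteq> carrier G \<Longrightarrow> MonX G S \<subseteq> carrier G"
  unfolding MonX_def using mprod_closed by blast

lemma one_in_MonX: "\<one> \<in> MonX G S"
  unfolding MonX_def by (auto intro: exI[of _ "[]"])

lemma wlen_le_length: "set xs \<subseteq> S \<Longrightarrow> wlen G S (mprod G xs) \<le> length xs"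
  unfolding wlen_def by (rule Least_le) auto

lemma wlen_one [simp]: "wlen G S \<one> = 0"
  using wlen_le_length[of "[]" S] by simp

lemma obtain_shortest_word:
  assumes "h \<in> MonX G S"
  obtains ws where "set ws \<subseteq> S" "mprod G ws = h" "length ws = wlen G S h"
proof -
  have "\<exists>ws. set ws \<subseteq> S \<and> mprod G ws = h \<and> length ws = wlen G S h"
    unfolding wlen_def by (rule LeastI_ex) (use assms in \<open>auto simp: MonX_def\<close>)
  then show ?thesis using that by blast
qed

lemma
  assumes "S \<subseteq> carrier G" "a \<in> MonX G S" "b \<in> MonX G S"
  shows mult_in_MonX: "a \<otimes> b \<in> MonX G S"
    and wlen_mult_le: "wlen G S (a \<otimes> b) \<le> wlen G S a + wlen G S b"
proof -
  obtain as where as: "set as \<subseteq> S" "mprod G as = a" "length as = wlen G S a"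
    using obtain_shortest_word[OF assms(2)] .
  obtain bs where bs: "set bs \<subseteq> S" "mprod G bs = b" "length bs = wlen G S b"
    using obtain_shortest_word[OF assms(3)] .
  have word: "set (as @ bs) \<subseteq> S" "mprod G (as @ bs) = a \<otimes> b"
    using as bs assms(1) by (auto simp: mprod_append)
  then show "a \<otimes> b \<in> MonX G S"
    unfolding MonX_def by blast
  show "wlen G S (a \<otimes> b) \<le> wlen G S a + wlen G S b"
    using wlen_le_length[OF word(1)] word(2) as(3) bs(3) by simp
qed

lemma mprod_in_MonX:
  "S \<subseteq> carrier G \<Longrightarrow> set xs \<subseteq> MonX G S \<Longrightarrow> mprod G xs \<in> MonX G S"
  by (induction xs) (simp_all add: one_in_MonX mult_in_MonX)

lemma wlen_mprod_le:
  assumes "S \<subseteq> carrier G" "set xs \<subseteq> MonX G S"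
  shows "wlen G S (mprod G xs) \<le> (\<Sum>x\<leftarrow>xs. wlen G S x)"
  using assms(2)
proof (induction xs)
  case Nil
  then show ?case by simp
next
  case (Cons a xs)
  then have "wlen G S (a \<otimes> mprod G xs) \<le> wlen G S a + wlen G S (mprod G xs)"
    by (simp add: wlen_mult_le mprod_in_MonX assms(1))
  then show ?case using Cons by simp
qed

end

context group
begin

lemma mprod_map_conj:
  assumes "c \<in> carrier G" "set xs \<subseteq> carrier G"
  shows "mprod G (map (\<lambda>s. c \<otimes> s \<otimes> inv c) xs) = c \<otimes> mprod G xs \<otimes> inv c"
  using assms(2)
proof (induction xs)
  case Nil
  then show ?case using assms(1) by simp
next
  case (Cons x xs)
  then have x: "x \<in> carrier G" and p: "mprod G xs \<in> carrier G"
    by (auto simp: mprod_closed)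
  have "(c \<otimes> x \<otimes> inv c) \<otimes> (c \<otimes> mprod G xs \<otimes> inv c) = c \<otimes> (x \<otimes> mprod G xs) \<otimes> inv c"
    using assms(1) x p by (simp add: m_assoc inv_solve_left')
  then show ?case using Cons by simp
qed

lemma
  assumes "S \<subseteq> carrier G"
    and conj_closed: "\<And>x y. x \<in> S \<Longrightarrow> y \<in> carrier G \<Longrightarrow> y \<otimes> x \<otimes> inv y \<in> S"
    and "a \<in> MonX G S" "c \<in> carrier G"
  shows conj_in_MonX: "c \<otimes> a \<otimes> inv c \<in> MonX G S"
    and wlen_conj_le: "wlen G S (c \<otimes> a \<otimes> inv c) \<le> wlen G S a"
proof -
  obtain as where as: "set as \<subseteq> S" "mprod G as = a" "length as = wlen G S a"
    using obtain_shortest_word[OF assms(3)] .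
  let ?cs = "map (\<lambda>s. c \<otimes> s \<otimes> inv c) as"
  have word: "set ?cs \<subseteq> S" "mprod G ?cs = c \<otimes> a \<otimes> inv c"
    using as assms(1,4) conj_closed by (auto simp: mprod_map_conj)
  then show "c \<otimes> a \<otimes> inv c \<in> MonX G S"
    unfolding MonX_def by blast
  show "wlen G S (c \<otimes> a \<otimes> inv c) \<le> wlen G S a"
    using wlen_le_length[OF word(1)] word(2) as(3) by simp
qed

lemma mprod_eq_mprod_nths_mult:
  assumes S: "S \<subseteq> carrier G"
    and conj_closed: "\<And>x y. x \<in> S \<Longrightarrow> y \<in> carrier G \<Longrightarrow> y \<otimes> x \<otimes> inv y \<in> S"
    and "set xs \<subseteq> MonX G S"
  shows "\<exists>h \<in> MonX G S. mprod G xs = mprod G (nths xs I) \<otimes> h \<and>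
           wlen G S h \<le> (\<Sum>x\<leftarrow>nths xs (- I). wlen G S x)"
  using assms(3)
proof (induction xs arbitrary: I)
  case Nil
  show ?case by (auto intro: bexI[of _ \<one>] simp: one_in_MonX)
next
  case (Cons a xs)
  define J where "J = {j. Suc j \<in> I}"
  have compl_J: "{j. Suc j \<in> - I} = - J"
    unfolding J_def by auto
  have MonX_carrier: "MonX G S \<subseteq> carrier G"
    using MonX_subset_carrier[OF S] .
  have a: "a \<in> MonX G S" and xs: "set xs \<subseteq> MonX G S"
    using Cons.prems by auto
  obtain h where h: "h \<in> MonX G S" "mprod G xs = mprod G (nths xs J) \<otimes> h"
      "wlen G S h \<le> (\<Sum>x\<leftarrow>nths xs (- J). wlen G S x)"
    using Cons.IH[OF xs] by blast
  define Y where "Y = mprod G (nths xs J)"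
  have Y: "Y \<in> carrier G"
    unfolding Y_def using xs set_nths_subset[of xs J] MonX_carrier by (auto simp: mprod_closed)
  have a_h: "a \<in> carrier G" "h \<in> carrier G"
    using a h(1) MonX_carrier by auto
  have prod: "mprod G (a # xs) = a \<otimes> (Y \<otimes> h)"
    using h(2) by (simp add: Y_def)
  show ?case
  proof (cases "0 \<in> I")
    case True
    then have "mprod G (a # xs) = mprod G (nths (a # xs) I) \<otimes> h"
      using prod Y a_h by (simp add: nths_Cons J_def[symmetric] Y_def m_assoc)
    then show ?thesis
      using h True compl_J by (auto simp: nths_Cons)
  next
    case False
    define c where "c = inv Y \<otimes> a \<otimes> Y"
    have c: "c \<in> MonX G S" "wlen G S c \<le> wlen G S a"
      using conj_in_MonX[OF S conj_closed a, of "inv Y"] wlen_conj_le[OF S conj_closed a, of "inv Y"] Y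
      by (simp_all add: c_def)
    have "mprod G (a # xs) = Y \<otimes> (c \<otimes> h)"
      unfolding prod c_def using a_h Y by (simp flip: m_assoc)
    then have "mprod G (a # xs) = mprod G (nths (a # xs) I) \<otimes> (c \<otimes> h)"
      using False by (simp add: nths_Cons J_def[symmetric] Y_def)
    moreover have "wlen G S (c \<otimes> h) \<le> (\<Sum>x\<leftarrow>nths (a # xs) (- I). wlen G S x)"
      using wlen_mult_le[OF S c(1) h(1)] c(2) h(3) False compl_J by (simp add: nths_Cons)
    ultimately show ?thesis
      using mult_in_MonX[OF S c(1) h(1)] by blast
  qed
qed

end

theorem lemma2p4:
  fixes G (structure) and S :: "'a set" and g :: 'a and xs :: "'a list" and I :: "nat set"
  assumes "group G"
    and "S \<subseteq> carrier G"
    and "generate G S = carrier G"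
    and "\<And>x y. x \<in> S \<Longrightarrow> y \<in> carrier G \<Longrightarrow> y \<otimes> x \<otimes> inv y \<in> S"
    and "g \<in> MonX G S"
    and "set xs \<subseteq> MonX G S"
    and "mprod G xs = g"
    and "(\<Sum>x\<leftarrow>xs. wlen G S x) = wlen G S g"
    and "I \<subseteq> {..<length xs}" and "I \<noteq> {}"
  shows "mprod G (nths xs I) \<in> interval1 G S g"
proof -
  interpret group G by fact
  obtain h where h: "h \<in> MonX G S" "g = mprod G (nths xs I) \<otimes> h"
      "wlen G S h \<le> (\<Sum>x\<leftarrow>nths xs (- I). wlen G S x)"
    using mprod_eq_mprod_nths_mult[OF assms(2,4,6)] assms(7) by blast
  have selected: "set (nths xs I) \<subseteq> MonX G S"
    using assms(6) set_nths_subset[of xs I] by blast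
  let ?y = "mprod G (nths xs I)"
  have y: "?y \<in> MonX G S" "wlen G S ?y \<le> (\<Sum>x\<leftarrow>nths xs I. wlen G S x)"
    using mprod_in_MonX[OF assms(2) selected] wlen_mprod_le[OF assms(2) selected] by auto
  have "wlen G S g \<le> wlen G S ?y + wlen G S h"
    using wlen_mult_le[OF assms(2) y(1) h(1)] h(2) by simp
  then have "wlen G S ?y + wlen G S h = wlen G S g"
    using y(2) h(3) sum_list_nths_Compl[of "wlen G S" xs I] assms(8) by linarith
  then show ?thesis
    unfolding interval1_def mle_def using y(1) h assms(5) by auto
qed

end
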